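(* In the setting below: (i) For every ordinal $\alpha\geq0$, if $x\in M_{\alpha+1}$ then $\mathcal{P}(x)\cap M\in M_{\alpha+2}$. (ii) For every ordinal $\alpha\geq1$, if $x\in M$ and $x\subseteq M_\alpha$, then $x\in M_{\alpha+1}$.
   Context: Work in ZFA (ZF with a set $A$ of atoms, i.e. urelements that have no elements), extended by a primitive binary relation $\preccurlyeq$ on $A$, with Separation and Replacement holding for formulas mentioning $\preccurlyeq$. $A$ is an infinite set of atoms and $\preccurlyeq$ is a pre-ordering (reflexive, transitive) on $A$ with no minimal elements: for every $a\in A$ there is $b\in A$ with $b\preccurlyeq a$ and not $a\preccurlyeq b$. For $a\in A$, $pr(a)=\{b\in A:b\preccurlyeq a\}$; $LO(A,\preccurlyeq)$ is the set of nonempty $x\subseteq A$ with $pr(a)\subseteq x$ for all $a\in x$. For a set $X$ of sets, $LO(X,\subseteq)$ is the set of nonempty $x\subseteq X$ such that for every $y\in x$ and every $z\in X$ with $z\subseteq y$, $z\in x$. The magmatic hierarchy: $M_1=LO(A,\preccurlyeq)$; $M_{\alpha+1}=LO(M_\alpha,\subseteq)$ for $\alpha\geq1$; $M_\alpha=\bigcup_{1\leq\beta<\alpha}M_\beta$ for limit $\alpha$; $M=\bigcup_{\alpha\geq1}M_\alpha$. *)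

theory Defs
  imports Main
begin

text \<open>
  A ZFA-style universe is modelled by a HOL type 'v together with a membership
  map elts (elts x = the set of members of x) and a set A of atoms.
  Ordinals are modelled by an arbitrary well-ordered index type 'o without greatest element.
\<close>

definition ozero :: "'o::wellorder" where
  "ozero = (LEAST a. True)"

definition onext :: "'o::wellorder \<Rightarrow> 'o" where
  "onext a = (LEAST b. a < b)"

definition olimit :: "'o::wellorder \<Rightarrow> bool" where
  "olimit l \<longleftrightarrow> ozero < l \<and> (\<forall>b<l. \<exists>c. b < c \<and> c < l)"

definition pr :: "'v set \<Rightarrow> ('v \<Rightarrow> 'v \<Rightarrow> bool) \<Rightarrow> 'v \<Rightarrow> 'v set" where
  "pr A le a = {b \<in> A. le b a}"

definition LO_atoms :: "('v \<Rightarrow> 'v set) \<Rightarrow> 'v set \<Rightarrow> ('v \<Rightarrow> 'v \<Rightarrow> bool) \<Rightarrow> 'v set" where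
  "LO_atoms elts A le =
     {x. x \<notin> A \<and> elts x \<noteq> {} \<and> elts x \<subseteq> A \<and> (\<forall>a\<in>elts x. pr A le a \<subseteq> elts x)}"

definition LO_sub :: "('v \<Rightarrow> 'v set) \<Rightarrow> 'v set \<Rightarrow> 'v set \<Rightarrow> 'v set" where
  "LO_sub elts A X =
     {x. x \<notin> A \<and> elts x \<noteq> {} \<and> elts x \<subseteq> X \<and>
         (\<forall>y\<in>elts x. \<forall>z\<in>X. elts z \<subseteq> elts y \<longrightarrow> z \<in> elts x)}"

text \<open>Mh is the magmatic hierarchy: Mh (onext ozero) = M_1 etc.; index ozero carries the empty set (M_0 is not used).\<close>
definition magmatic :: "('v \<Rightarrow> 'v set) \<Rightarrow> 'v set \<Rightarrow> ('v \<Rightarrow> 'v \<Rightarrow> bool) \<Rightarrow> ('o::wellorder \<Rightarrow> 'v set) \<Rightarrow> bool" where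
  "magmatic elts A le Mh \<longleftrightarrow>
     Mh ozero = {} \<and>
     Mh (onext ozero) = LO_atoms elts A le \<and>
     (\<forall>a. ozero < a \<longrightarrow> Mh (onext a) = LO_sub elts A (Mh a)) \<and>
     (\<forall>l. olimit l \<longrightarrow> Mh l = (\<Union>b\<in>{b. ozero < b \<and> b < l}. Mh b))"

definition Mall :: "('o::wellorder \<Rightarrow> 'v set) \<Rightarrow> 'v set" where
  "Mall Mh = (\<Union>a\<in>{a. ozero < a}. Mh a)"

end

theory Submission
  imports Defs
begin

text \<open>
  Call w subset-stable if every M-subset of w lies in every level that contains w.
  Stability passes from the members of w to w by induction on the level e: if w is in
  M_(h+1), an M-subset u of w sits in some successor level M_(r+1), and it is downward
  closed in M_h because an M-subset t of a member v of u lies, by stability of v,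
  in M_r together with v. Since stability is vacuous for atoms, induction on the
  level of w shows that every element of M is subset-stable, which is (ii) at
  once, and for (i) it puts P(x) \<inter> M inside M_(\<alpha>+1), where it is evidently downward closed.
  Besides the hierarchy itself only the existence of the sets S \<subseteq> M_\<alpha> (rich) is used.
\<close>

lemma ozero_le: "ozero \<le> (a::'o::wellorder)"
  unfolding ozero_def by (rule Least_le) simp

lemma onext_le: "(a::'o::wellorder) < b \<Longrightarrow> onext a \<le> b"
  unfolding onext_def by (rule Least_le)

lemma less_onext: "(a::'o::wellorder) < b \<Longrightarrow> a < onext a"
  unfolding onext_def by (rule LeastI)

lemma ordinal_cases:
  fixes a :: "'o::wellorder"
  obtains (zero) "a = ozero" | (one) "a = onext ozero" | (succ) b where "ozero < b" "a = onext b"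
    | (limit) "olimit a"
proof (cases "a = ozero \<or> olimit a")
  case False
  then obtain b where b: "b < a" "\<not> (\<exists>c. b < c \<and> c < a)"
    using ozero_le[of a] unfolding olimit_def by (auto simp: order.order_iff_strict)
  have "a = onext b"
    using onext_le[OF b(1)] less_onext[OF b(1)] b(2) by (auto simp: order.order_iff_strict)
  moreover have "b = ozero \<or> ozero < b"
    using ozero_le[of b] by (auto simp: order.order_iff_strict)
  ultimately show ?thesis using that by blast
qed (use that in blast)

locale magmatic_hierarchy =
  fixes elts :: "'v \<Rightarrow> 'v set" and A :: "'v set" and le :: "'v \<Rightarrow> 'v \<Rightarrow> bool"
    and Mh :: "'o::wellorder \<Rightarrow> 'v set"
  assumes no_top: "\<forall>a::'o. \<exists>b. a < b"
    and hier: "magmatic elts A le Mh"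
begin

lemma less_onext_self: "(a::'o) < onext a"
  using no_top less_onext by blast

lemma ozero_less_onext: "ozero < onext (a::'o)"
  using ozero_le less_onext_self by (rule le_less_trans)

lemma Mh_ozero: "Mh ozero = {}"
  using hier unfolding magmatic_def by blast

lemma Mh_one: "Mh (onext ozero) = LO_atoms elts A le"
  using hier unfolding magmatic_def by blast

lemma Mh_onext: "ozero < b \<Longrightarrow> Mh (onext b) = LO_sub elts A (Mh b)"
  using hier unfolding magmatic_def by blast

lemma Mh_limit: "olimit l \<Longrightarrow> Mh l = (\<Union>b\<in>{b. ozero < b \<and> b < l}. Mh b)"
  using hier unfolding magmatic_def by blast

lemma in_Mall_iff: "x \<in> Mall Mh \<longleftrightarrow> (\<exists>a. ozero < a \<and> x \<in> Mh a)"
  unfolding Mall_def by auto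

lemma in_Mh_successor_level:
  assumes "ozero < a" and "x \<in> Mh a"
  shows "x \<in> Mh (onext ozero) \<or> (\<exists>b. ozero < b \<and> x \<in> Mh (onext b))"
  using assms
proof (induction a rule: less_induct)
  case (less a)
  show ?case
  proof (cases a rule: ordinal_cases)
    case limit
    then obtain b where "ozero < b" "b < a" "x \<in> Mh b"
      using Mh_limit less.prems by auto
    then show ?thesis using less.IH by blast
  qed (use less.prems in auto)
qed

lemma Mh_one_subset_atoms: "x \<in> Mh (onext ozero) \<Longrightarrow> elts x \<subseteq> A"
  using Mh_one unfolding LO_atoms_def by auto

lemma Mh_onext_subset: "ozero < b \<Longrightarrow> x \<in> Mh (onext b) \<Longrightarrow> elts x \<subseteq> Mh b"
  using Mh_onext unfolding LO_sub_def by auto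

lemma Mh_onext_downward_closed:
  "\<lbrakk>ozero < b; x \<in> Mh (onext b); y \<in> elts x; z \<in> Mh b; elts z \<subseteq> elts y\<rbrakk> \<Longrightarrow> z \<in> elts x"
  using Mh_onext unfolding LO_sub_def by auto

lemma Mh_nonatom_nonempty:
  assumes "ozero < a" and "x \<in> Mh a"
  shows "x \<notin> A \<and> elts x \<noteq> {}"
  using in_Mh_successor_level[OF assms] Mh_one Mh_onext
  unfolding LO_atoms_def LO_sub_def by auto

lemma in_Mh_onext_iff:
  assumes "ozero < a"
  shows "x \<in> Mh (onext a) \<longleftrightarrow> x \<in> Mall Mh \<and> elts x \<subseteq> Mh a \<and>
    (\<forall>y\<in>elts x. \<forall>z\<in>Mh a. elts z \<subseteq> elts y \<longrightarrow> z \<in> elts x)"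
proof -
  have "x \<in> Mall Mh \<Longrightarrow> x \<notin> A \<and> elts x \<noteq> {}"
    using Mh_nonatom_nonempty unfolding in_Mall_iff by blast
  moreover have "x \<in> Mh (onext a) \<Longrightarrow> x \<in> Mall Mh"
    using ozero_less_onext unfolding in_Mall_iff by blast
  ultimately show ?thesis
    using Mh_onext[OF assms] unfolding LO_sub_def by blast
qed

lemma Mall_subset_atoms:
  assumes "x \<in> Mall Mh" and "elts x \<subseteq> A"
  shows "x \<in> Mh (onext ozero)"
proof -
  obtain s where "ozero < s" "x \<in> Mh s"
    using assms(1) unfolding in_Mall_iff by blast
  then show ?thesis
    using in_Mh_successor_level Mh_onext_subset Mh_nonatom_nonempty assms(2) by blast
qed

lemma Mall_subset_level:
  assumes "x \<in> Mall Mh" and "ozero < h" and "elts x \<subseteq> Mh h"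
  obtains r where "ozero < r" "x \<in> Mh (onext r)"
proof -
  obtain s where "ozero < s" "x \<in> Mh s"
    using assms(1) unfolding in_Mall_iff by blast
  moreover have "x \<notin> Mh (onext ozero)"
    using Mh_one_subset_atoms Mh_nonatom_nonempty ozero_less_onext assms by blast
  ultimately show ?thesis
    using in_Mh_successor_level that by blast
qed

definition subset_stable :: "'v \<Rightarrow> bool" where
  "subset_stable w \<longleftrightarrow>
     (\<forall>e u. ozero < e \<longrightarrow> w \<in> Mh e \<longrightarrow> u \<in> Mall Mh \<longrightarrow> elts u \<subseteq> elts w \<longrightarrow> u \<in> Mh e)"

lemma in_Mh_onext_if_members_stable:
  assumes "ozero < a" and x: "x \<in> Mall Mh" and x_sub: "elts x \<subseteq> Mh a"
    and stable: "\<forall>y\<in>elts x. subset_stable y"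
  shows "x \<in> Mh (onext a)"
proof -
  obtain r where r: "ozero < r" "x \<in> Mh (onext r)"
    using Mall_subset_level x assms(1) x_sub by blast
  have "z \<in> elts x" if y: "y \<in> elts x" and z: "z \<in> Mh a" "elts z \<subseteq> elts y" for y z
  proof -
    have "y \<in> Mh r" using Mh_onext_subset[OF r] y by blast
    moreover have "z \<in> Mall Mh" using z assms(1) unfolding in_Mall_iff by blast
    ultimately have "z \<in> Mh r"
      using stable y z r(1) unfolding subset_stable_def by blast
    then show ?thesis using Mh_onext_downward_closed[OF r y] z by blast
  qed
  then show ?thesis
    using in_Mh_onext_iff[OF assms(1)] x x_sub by blast
qed

lemma subset_stable_if_members_stable:
  assumes stable: "\<forall>y\<in>elts w. subset_stable y"
  shows "subset_stable w"
  unfolding subset_stable_def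
proof (intro allI impI)
  fix e u
  assume "ozero < e" "w \<in> Mh e" "u \<in> Mall Mh" "elts u \<subseteq> elts w"
  then show "u \<in> Mh e"
  proof (induction e rule: less_induct)
    case (less e)
    show ?case
    proof (cases e rule: ordinal_cases)
      case zero
      then show ?thesis using less.prems Mh_ozero by simp
    next
      case one
      then show ?thesis
        using less.prems Mall_subset_atoms Mh_one_subset_atoms by blast
    next
      case (succ h)
      then show ?thesis
        using less.prems stable Mh_onext_subset in_Mh_onext_if_members_stable by blast
    next
      case limit
      then obtain b where "ozero < b" "b < e" "w \<in> Mh b"
        using Mh_limit less.prems by auto
      then show ?thesis using less.IH less.prems Mh_limit[OF limit] by blast
    qed
  qed
qed

lemma subset_stable_Mh: "w \<in> Mh k \<Longrightarrow> subset_stable w"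
proof (induction k arbitrary: w rule: less_induct)
  case (less k)
  show ?case
  proof (cases k rule: ordinal_cases)
    case zero
    then show ?thesis using less.prems Mh_ozero by simp
  next
    case one
    have "subset_stable y" if "y \<in> A" for y
      using that Mh_nonatom_nonempty unfolding subset_stable_def by blast
    then show ?thesis
      using one less.prems Mh_one_subset_atoms subset_stable_if_members_stable by blast
  next
    case (succ b)
    then have "elts w \<subseteq> Mh b"
      using less.prems Mh_onext_subset by blast
    moreover have "b < k"
      using succ less_onext_self by simp
    ultimately show ?thesis
      using less.IH subset_stable_if_members_stable by blast
  next
    case limit
    then obtain b where "b < k" "w \<in> Mh b"
      using less.prems Mh_limit by auto
    then show ?thesis using less.IH by blast
  qed
qed

lemma in_Mh_onext_if_subset:
  assumes "ozero < a" and "x \<in> Mall Mh" and "elts x \<subseteq> Mh a"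
  shows "x \<in> Mh (onext a)"
proof -
  have "\<forall>y\<in>elts x. subset_stable y"
    using assms(3) subset_stable_Mh by blast
  then show ?thesis
    using assms in_Mh_onext_if_members_stable by blast
qed

lemma Pow_Mall_in_Mh_onext_onext:
  assumes x: "x \<in> Mh (onext a)"
    and rich: "\<And>S. S \<subseteq> Mh (onext a) \<Longrightarrow> \<exists>p. p \<notin> A \<and> elts p = S"
  shows "\<exists>p\<in>Mh (onext (onext a)). elts p = {y \<in> Mall Mh. elts y \<subseteq> elts x}"
proof -
  let ?S = "{y \<in> Mall Mh. elts y \<subseteq> elts x}"
  have S_sub: "?S \<subseteq> Mh (onext a)"
    using subset_stable_Mh[OF x] x ozero_less_onext unfolding subset_stable_def by blast
  obtain p where p: "p \<notin> A" "elts p = ?S"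
    using rich[OF S_sub] by blast
  have "x \<in> ?S"
    using x ozero_less_onext unfolding in_Mall_iff by blast
  then have "elts p \<noteq> {}"
    using p(2) by blast
  have "z \<in> ?S" if "y \<in> ?S" "z \<in> Mh (onext a)" "elts z \<subseteq> elts y" for y z
    using that ozero_less_onext unfolding in_Mall_iff by blast
  then have "\<forall>y\<in>elts p. \<forall>z\<in>Mh (onext a). elts z \<subseteq> elts y \<longrightarrow> z \<in> elts p"
    unfolding p(2) by blast
  with \<open>elts p \<noteq> {}\<close> have "p \<in> LO_sub elts A (Mh (onext a))"
    using p(1) S_sub[folded p(2)] unfolding LO_sub_def by blast
  with p show ?thesis
    using Mh_onext[OF ozero_less_onext] by blast
qed

end

theorem corollary4p6:
  fixes elts :: "'v \<Rightarrow> 'v set" and A :: "'v set" and le :: "'v \<Rightarrow> 'v \<Rightarrow> bool"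
    and Mh :: "'o::wellorder \<Rightarrow> 'v set"
  assumes atoms_empty: "\<forall>a\<in>A. elts a = {}"
    and extensional: "\<forall>x y. x \<notin> A \<longrightarrow> y \<notin> A \<longrightarrow> elts x = elts y \<longrightarrow> x = y"
    and rich: "\<forall>a S. S \<subseteq> Mh a \<longrightarrow> (\<exists>x. x \<notin> A \<and> elts x = S)"
    and inf_A: "infinite A"
    and refl: "\<forall>a\<in>A. le a a"
    and trans: "\<forall>a\<in>A. \<forall>b\<in>A. \<forall>c\<in>A. le a b \<longrightarrow> le b c \<longrightarrow> le a c"
    and no_min: "\<forall>a\<in>A. \<exists>b\<in>A. le b a \<and> \<not> le a b"
    and no_top: "\<forall>a::'o. \<exists>b. a < b"
    and hier: "magmatic elts A le Mh"
  shows "(\<forall>a x. x \<in> Mh (onext a) \<longrightarrow>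
            (\<exists>p\<in>Mh (onext (onext a)). elts p = {y \<in> Mall Mh. elts y \<subseteq> elts x}))
       \<and> (\<forall>a x. ozero < a \<longrightarrow> x \<in> Mall Mh \<longrightarrow> elts x \<subseteq> Mh a \<longrightarrow> x \<in> Mh (onext a))"
proof -
  interpret magmatic_hierarchy elts A le Mh
    using no_top hier by unfold_locales
  show ?thesis
  proof (intro conjI allI impI)
    fix a x
    assume "x \<in> Mh (onext a)"
    then show "\<exists>p\<in>Mh (onext (onext a)). elts p = {y \<in> Mall Mh. elts y \<subseteq> elts x}"
      using rich by (intro Pow_Mall_in_Mh_onext_onext) blast+
  qed (rule in_Mh_onext_if_subset)
qed

end
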